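(* Let $T$ be a finite tree endowed with a partial domino tiling, $\mathbb{K}$ a field, and $\boldsymbol{\alpha}=(\alpha_t)_{t\in T}$ a family of invertible elements of $\mathbb{K}$. Then $X_T(\boldsymbol{\alpha})$ is isomorphic to $X_T(\boldsymbol{\beta})$ for some family $\boldsymbol{\beta}=(\beta_t)_{t\in T}$ of invertible elements of $\mathbb{K}$ such that $\beta_s=1$ for every vertex $s$ covered by a domino.
   Context: For a finite tree $T$ write $s-t$ when vertices $s,t$ are adjacent. For a family $\boldsymbol{\alpha}=(\alpha_t)_{t\in T}$ of elements of a field $\mathbb{K}$, $X_T(\boldsymbol{\alpha})$ denotes the affine scheme over $\mathbb{K}$ with coordinates $x_t,x'_t$ ($t\in T$) defined by $x_t x'_t = 1+\alpha_t\prod_{s-t} x_s$ for all vertices $t$. A partial domino tiling of $T$ is a subset of the edges such that every vertex is an end of at most one chosen edge (domino); a vertex is covered if it is an end of a chosen edge. *)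

theory Defs
  imports Main "HOL-Library.Poly_Mapping"
begin

definition tree_edges :: "('v \<Rightarrow> 'v \<Rightarrow> bool) \<Rightarrow> 'v set set" where
  "tree_edges adj = {{s, t} | s t. adj s t}"

definition is_tree :: "('v::finite \<Rightarrow> 'v \<Rightarrow> bool) \<Rightarrow> bool" where
  "is_tree adj \<longleftrightarrow>
     (\<forall>s t. adj s t \<longrightarrow> adj t s) \<and> (\<forall>s. \<not> adj s s) \<and>
     (\<forall>s t. adj\<^sup>*\<^sup>* s t) \<and> card (tree_edges adj) = card (UNIV :: 'v set) - 1"

definition partial_domino_tiling :: "('v \<Rightarrow> 'v \<Rightarrow> bool) \<Rightarrow> 'v set set \<Rightarrow> bool" where
  "partial_domino_tiling adj D \<longleftrightarrow>
     D \<subseteq> tree_edges adj \<and> (\<forall>e\<in>D. \<forall>e'\<in>D. e \<noteq> e' \<longrightarrow> e \<inter> e' = {})"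

definition covered :: "'v set set \<Rightarrow> 'v \<Rightarrow> bool" where
  "covered D s \<longleftrightarrow> s \<in> \<Union>D"

type_synonym ('x, 'k) mpoly = "('x \<Rightarrow>\<^sub>0 nat) \<Rightarrow>\<^sub>0 'k"

definition mp_const :: "'k::comm_ring_1 \<Rightarrow> ('x, 'k) mpoly" where
  "mp_const c = Poly_Mapping.single 0 c"

definition mp_var :: "'x \<Rightarrow> ('x, 'k::comm_ring_1) mpoly" where
  "mp_var v = Poly_Mapping.single (Poly_Mapping.single v 1) 1"

definition mp_subst :: "('x \<Rightarrow> ('y, 'k::comm_ring_1) mpoly) \<Rightarrow> ('x, 'k) mpoly \<Rightarrow> ('y, 'k) mpoly" where
  "mp_subst \<sigma> p =
     (\<Sum>mon\<in>Poly_Mapping.keys p. mp_const (Poly_Mapping.lookup p mon) * (\<Prod>v\<in>Poly_Mapping.keys (mon :: 'x \<Rightarrow>\<^sub>0 nat). \<sigma> v ^ Poly_Mapping.lookup mon v))"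

definition mp_ideal :: "('i \<Rightarrow> ('x, 'k::comm_ring_1) mpoly) \<Rightarrow> ('x, 'k) mpoly set" where
  "mp_ideal g = {(\<Sum>i\<in>I. c i * g i) | I c. finite I}"

text \<open>Coordinates: (t, False) stands for x_t and (t, True) for x'_t.
The defining relation at vertex t: x_t x'_t - 1 - alpha_t prod_{s-t} x_s.\<close>

definition XT_rel :: "('v::finite \<Rightarrow> 'v \<Rightarrow> bool) \<Rightarrow> ('v \<Rightarrow> 'k::field) \<Rightarrow> 'v
                       \<Rightarrow> ('v \<times> bool, 'k) mpoly" where
  "XT_rel adj \<alpha> t =
     mp_var (t, False) * mp_var (t, True) - 1
       - mp_const (\<alpha> t) * (\<Prod>s\<in>{s. adj s t}. mp_var (s, False))"

definition XT_ideal :: "('v::finite \<Rightarrow> 'v \<Rightarrow> bool) \<Rightarrow> ('v \<Rightarrow> 'k::field)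
                         \<Rightarrow> ('v \<times> bool, 'k) mpoly set" where
  "XT_ideal adj \<alpha> = mp_ideal (XT_rel adj \<alpha>)"

text \<open>Isomorphism of the affine K-schemes X_T(alpha) and X_T(beta), i.e. of their
coordinate K-algebras K[x,x']/I_alpha and K[x,x']/I_beta: a morphism X_alpha -> X_beta
is given by polynomials F (images of the coordinates) such that pulling back the
relations of X_beta lands in I_alpha; likewise G backwards; and both composites are the
identity modulo the respective ideals.\<close>

definition XT_iso :: "('v::finite \<Rightarrow> 'v \<Rightarrow> bool) \<Rightarrow> ('v \<Rightarrow> 'k::field) \<Rightarrow> ('v \<Rightarrow> 'k) \<Rightarrow> bool" where
  "XT_iso adj \<alpha> \<beta> \<longleftrightarrow>
     (\<exists>F G :: 'v \<times> bool \<Rightarrow> ('v \<times> bool, 'k) mpoly.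
        (\<forall>t. mp_subst F (XT_rel adj \<beta> t) \<in> XT_ideal adj \<alpha>) \<and>
        (\<forall>t. mp_subst G (XT_rel adj \<alpha> t) \<in> XT_ideal adj \<beta>) \<and>
        (\<forall>v. mp_subst F (G v) - mp_var v \<in> XT_ideal adj \<alpha>) \<and>
        (\<forall>v. mp_subst G (F v) - mp_var v \<in> XT_ideal adj \<beta>))"

end

(*
  Rescaling the coordinates by x_t \<mapsto> \<nu>_t x_t, x'_t \<mapsto> \<nu>_t\<^sup>-\<^sup>1 x'_t, with all \<nu>_t invertible, is an
  isomorphism X_T(\<alpha>) \<cong> X_T(\<beta>) for \<beta>_t = \<alpha>_t \<Prod>_{s-t} \<nu>_s\<^sup>-\<^sup>1.  It therefore suffices to find invertible
  \<mu> with \<Prod>_{s-t} \<mu>_s = \<alpha>_t\<^sup>-\<^sup>1 at every covered vertex t.  This multiplicative system is solved by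
  peeling off dominoes: since the covered vertices induce a forest, some domino {l, p} has an end
  l whose only covered neighbour is p.  Solving first for the remaining dominoes (with \<mu> = 1 at l
  and p), the value \<mu>_p settles the equation at l and then \<mu>_l settles the one at p; the effect of
  \<mu>_p on the other neighbours of p is compensated in advance by adjusting their targets.
*)

theory Submission
  imports Defs
begin

lemma poly_mapping_sum_single:
  "p = (\<Sum>m\<in>Poly_Mapping.keys p. Poly_Mapping.single m (Poly_Mapping.lookup p m))"
  by (rule poly_mapping_eqI) (auto simp: lookup_sum lookup_single when_def in_keys_iff)

lemma mp_const_0 [simp]: "mp_const 0 = 0"
  by (simp add: mp_const_def)

lemma mp_const_1 [simp]: "mp_const 1 = 1"
  by (simp add: mp_const_def)

lemma mp_const_add: "mp_const (a + b) = mp_const a + mp_const b"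
  by (simp add: mp_const_def single_add)

lemma mp_const_mult: "mp_const (a * b) = mp_const a * mp_const b"
  by (simp add: mp_const_def mult_single)

lemma mp_const_prod: "mp_const (\<Prod>i\<in>I. f i) = (\<Prod>i\<in>I. mp_const (f i))"
  by (induction I rule: infinite_finite_induct) (auto simp: mp_const_mult)

lemma mp_const_inverse_mult:
  "c \<noteq> 0 \<Longrightarrow> mp_const (inverse c) * (mp_const c * p) = (p :: ('x, 'k::field) mpoly)"
  "c \<noteq> 0 \<Longrightarrow> mp_const c * (mp_const (inverse c) * p) = (p :: ('x, 'k::field) mpoly)"
  by (simp_all add: mult.assoc[symmetric] mp_const_mult[symmetric])

definition mon_subst :: "('x \<Rightarrow> ('y, 'k::comm_ring_1) mpoly) \<Rightarrow> ('x \<Rightarrow>\<^sub>0 nat) \<Rightarrow> ('y, 'k) mpoly" where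
  "mon_subst \<sigma> m = (\<Prod>v\<in>Poly_Mapping.keys m. \<sigma> v ^ Poly_Mapping.lookup m v)"

lemma mon_subst_superset:
  "finite S \<Longrightarrow> Poly_Mapping.keys m \<subseteq> S \<Longrightarrow> mon_subst \<sigma> m = (\<Prod>v\<in>S. \<sigma> v ^ Poly_Mapping.lookup m v)"
  unfolding mon_subst_def by (rule prod.mono_neutral_left) (auto simp: in_keys_iff)

lemma mon_subst_add: "mon_subst \<sigma> (a + b) = mon_subst \<sigma> a * mon_subst \<sigma> b"
proof -
  let ?S = "Poly_Mapping.keys a \<union> Poly_Mapping.keys b"
  have "mon_subst \<sigma> (a + b) = (\<Prod>v\<in>?S. \<sigma> v ^ Poly_Mapping.lookup (a + b) v)"
    by (rule mon_subst_superset) (auto simp: keys_add)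
  also have "\<dots> = (\<Prod>v\<in>?S. \<sigma> v ^ Poly_Mapping.lookup a v) * (\<Prod>v\<in>?S. \<sigma> v ^ Poly_Mapping.lookup b v)"
    by (simp add: lookup_add power_add prod.distrib)
  also have "\<dots> = mon_subst \<sigma> a * mon_subst \<sigma> b"
    by (simp add: mon_subst_superset[symmetric])
  finally show ?thesis .
qed

lemma mp_subst_eq_sum_mon_subst:
  "mp_subst \<sigma> p = (\<Sum>m\<in>Poly_Mapping.keys p. mp_const (Poly_Mapping.lookup p m) * mon_subst \<sigma> m)"
  by (simp add: mp_subst_def mon_subst_def)

lemma mp_subst_superset:
  "finite S \<Longrightarrow> Poly_Mapping.keys p \<subseteq> S \<Longrightarrow>
     mp_subst \<sigma> p = (\<Sum>m\<in>S. mp_const (Poly_Mapping.lookup p m) * mon_subst \<sigma> m)"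
  unfolding mp_subst_eq_sum_mon_subst by (rule sum.mono_neutral_left) (auto simp: in_keys_iff)

lemma mp_subst_add: "mp_subst \<sigma> (p + q) = mp_subst \<sigma> p + mp_subst \<sigma> q"
proof -
  let ?S = "Poly_Mapping.keys p \<union> Poly_Mapping.keys q"
  have "mp_subst \<sigma> (p + q) = (\<Sum>m\<in>?S. mp_const (Poly_Mapping.lookup (p + q) m) * mon_subst \<sigma> m)"
    by (rule mp_subst_superset) (auto simp: keys_add)
  also have "\<dots> = (\<Sum>m\<in>?S. mp_const (Poly_Mapping.lookup p m) * mon_subst \<sigma> m)
                + (\<Sum>m\<in>?S. mp_const (Poly_Mapping.lookup q m) * mon_subst \<sigma> m)"
    by (simp add: lookup_add mp_const_add distrib_right sum.distrib)
  also have "\<dots> = mp_subst \<sigma> p + mp_subst \<sigma> q"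
    by (simp add: mp_subst_superset[symmetric])
  finally show ?thesis .
qed

lemma mp_subst_diff: "mp_subst \<sigma> (p - q) = mp_subst \<sigma> p - mp_subst \<sigma> q"
  by (metis mp_subst_add diff_add_cancel eq_diff_eq)

lemma mp_subst_0 [simp]: "mp_subst \<sigma> 0 = 0"
  by (simp add: mp_subst_def)

lemma mp_subst_sum: "mp_subst \<sigma> (\<Sum>i\<in>I. f i) = (\<Sum>i\<in>I. mp_subst \<sigma> (f i))"
  by (induction I rule: infinite_finite_induct) (simp_all add: mp_subst_add)

lemma mp_subst_single: "mp_subst \<sigma> (Poly_Mapping.single m c) = mp_const c * mon_subst \<sigma> m"
  by (cases "c = 0") (simp_all add: mp_subst_eq_sum_mon_subst)

lemma mp_subst_mult: "mp_subst \<sigma> (p * q) = mp_subst \<sigma> p * mp_subst \<sigma> q"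
proof -
  let ?p = "\<lambda>a. Poly_Mapping.lookup p a" and ?q = "\<lambda>b. Poly_Mapping.lookup q b"
  have "p * q = (\<Sum>a\<in>Poly_Mapping.keys p. \<Sum>b\<in>Poly_Mapping.keys q.
                   Poly_Mapping.single a (?p a) * Poly_Mapping.single b (?q b))"
    by (subst (1) poly_mapping_sum_single, subst (1) poly_mapping_sum_single[of q])
       (simp add: sum_product)
  then have "mp_subst \<sigma> (p * q) = (\<Sum>a\<in>Poly_Mapping.keys p. \<Sum>b\<in>Poly_Mapping.keys q.
                mp_const (?p a) * mon_subst \<sigma> a * (mp_const (?q b) * mon_subst \<sigma> b))"
    by (simp add: mp_subst_sum mult_single mp_subst_single mon_subst_add mp_const_mult mult_ac)
  also have "\<dots> = mp_subst \<sigma> p * mp_subst \<sigma> q"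
    by (simp add: mp_subst_eq_sum_mon_subst sum_product)
  finally show ?thesis .
qed

lemma mp_subst_const [simp]: "mp_subst \<sigma> (mp_const c) = mp_const c"
  by (simp add: mp_const_def mp_subst_single mon_subst_def)

lemma mp_subst_one [simp]: "mp_subst \<sigma> 1 = 1"
  using mp_subst_const[of \<sigma> 1] by simp

lemma mp_subst_prod: "mp_subst \<sigma> (\<Prod>i\<in>I. f i) = (\<Prod>i\<in>I. mp_subst \<sigma> (f i))"
  by (induction I rule: infinite_finite_induct) (simp_all add: mp_subst_mult)

lemma mp_subst_var [simp]: "mp_subst \<sigma> (mp_var v) = \<sigma> v"
  by (simp add: mp_var_def mp_subst_single mon_subst_def)

definition mp_rescale :: "('v \<Rightarrow> 'k::field) \<Rightarrow> 'v \<times> bool \<Rightarrow> ('v \<times> bool, 'k) mpoly" where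
  "mp_rescale \<nu> = (\<lambda>(t, b). if b then mp_const (inverse (\<nu> t)) * mp_var (t, True)
                            else mp_const (\<nu> t) * mp_var (t, False))"

lemma mp_subst_rescale_XT_rel:
  assumes "\<forall>t. \<nu> t \<noteq> 0"
  shows "mp_subst (mp_rescale \<nu>) (XT_rel adj \<beta> t) = XT_rel adj (\<lambda>t. \<beta> t * (\<Prod>s\<in>{s. adj s t}. \<nu> s)) t"
proof -
  have diagonal: "mp_const (\<nu> t) * mp_var (t, False) * (mp_const (inverse (\<nu> t)) * mp_var (t, True))
      = mp_var (t, False) * mp_var (t, True)"
  proof -
    have "mp_const (\<nu> t) * mp_var (t, False) * (mp_const (inverse (\<nu> t)) * mp_var (t, True))
        = mp_const (\<nu> t) * (mp_const (inverse (\<nu> t)) * (mp_var (t, False) * mp_var (t, True)))"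
      by (simp only: mult_ac)
    then show ?thesis
      using assms by (simp add: mp_const_inverse_mult)
  qed
  have neighbours: "mp_const (\<beta> t) * (\<Prod>s\<in>{s. adj s t}. mp_const (\<nu> s) * mp_var (s, False))
      = mp_const (\<beta> t * (\<Prod>s\<in>{s. adj s t}. \<nu> s)) * (\<Prod>s\<in>{s. adj s t}. mp_var (s, False))"
    by (simp add: prod.distrib mp_const_prod mp_const_mult mult.assoc)
  show ?thesis
    unfolding XT_rel_def
    by (simp add: mp_subst_diff mp_subst_mult mp_subst_prod mp_rescale_def diagonal neighbours)
qed

lemma mp_subst_rescale_inverse:
  assumes "\<forall>t. \<nu> t \<noteq> 0"
  shows "mp_subst (mp_rescale \<nu>) (mp_rescale (\<lambda>t. inverse (\<nu> t)) v) = mp_var v"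
  using assms
  by (cases v) (auto simp: mp_rescale_def mp_subst_mult mp_const_inverse_mult)

lemma XT_rel_in_XT_ideal: "XT_rel adj \<alpha> t \<in> XT_ideal adj \<alpha>"
  unfolding XT_ideal_def mp_ideal_def
  by (rule CollectI, rule exI[of _ "{t}"], rule exI[of _ "\<lambda>_. 1"]) simp

lemma zero_in_XT_ideal: "0 \<in> XT_ideal adj \<alpha>"
  unfolding XT_ideal_def mp_ideal_def
  by (rule CollectI, rule exI[of _ "{}"]) simp

lemma XT_iso_rescale:
  fixes adj :: "'v::finite \<Rightarrow> 'v \<Rightarrow> bool" and \<alpha> \<mu> :: "'v \<Rightarrow> 'k::field"
  assumes \<mu>: "\<forall>t. \<mu> t \<noteq> 0"
  shows "XT_iso adj \<alpha> (\<lambda>t. \<alpha> t * (\<Prod>s\<in>{s. adj s t}. \<mu> s))" (is "XT_iso adj \<alpha> ?\<beta>")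
proof -
  define \<nu> where "\<nu> = (\<lambda>t. inverse (\<mu> t))"
  have \<nu>: "\<forall>t. \<nu> t \<noteq> 0"
    using \<mu> by (simp add: \<nu>_def)
  have \<mu>_eq: "\<mu> = (\<lambda>t. inverse (\<nu> t))"
    by (simp add: \<nu>_def)
  have "(\<Prod>s\<in>{s. adj s t}. \<nu> s) = inverse (\<Prod>s\<in>{s. adj s t}. \<mu> s)" for t
    using prod_inversef[of \<mu>] by (simp add: \<nu>_def comp_def)
  moreover have "(\<Prod>s\<in>{s. adj s t}. \<mu> s) \<noteq> 0" for t
    using \<mu> by simp
  ultimately have \<alpha>_eq: "(\<lambda>t. ?\<beta> t * (\<Prod>s\<in>{s. adj s t}. \<nu> s)) = \<alpha>"
    by (simp add: mult.assoc)
  show ?thesis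
    unfolding XT_iso_def
  proof (intro exI conjI allI)
    fix t
    show "mp_subst (mp_rescale \<nu>) (XT_rel adj ?\<beta> t) \<in> XT_ideal adj \<alpha>"
      by (simp only: mp_subst_rescale_XT_rel[OF \<nu>] \<alpha>_eq XT_rel_in_XT_ideal)
    show "mp_subst (mp_rescale \<mu>) (XT_rel adj \<alpha> t) \<in> XT_ideal adj ?\<beta>"
      by (simp only: mp_subst_rescale_XT_rel[OF \<mu>] XT_rel_in_XT_ideal)
  next
    fix v
    show "mp_subst (mp_rescale \<nu>) (mp_rescale \<mu> v) - mp_var v \<in> XT_ideal adj \<alpha>"
      using mp_subst_rescale_inverse[OF \<nu>] by (simp add: \<mu>_eq zero_in_XT_ideal)
    show "mp_subst (mp_rescale \<mu>) (mp_rescale \<nu> v) - mp_var v \<in> XT_ideal adj ?\<beta>"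
      using mp_subst_rescale_inverse[OF \<mu>] by (simp add: \<nu>_def zero_in_XT_ideal)
  qed
qed

lemma is_tree_sym: "is_tree adj \<Longrightarrow> adj s t \<Longrightarrow> adj t s"
  by (simp add: is_tree_def)

lemma is_tree_irrefl: "is_tree adj \<Longrightarrow> \<not> adj s s"
  by (simp add: is_tree_def)

definition induced_edges :: "('v \<Rightarrow> 'v \<Rightarrow> bool) \<Rightarrow> 'v set \<Rightarrow> 'v set set" where
  "induced_edges adj S = {{u, w} | u w. adj u w \<and> u \<in> S \<and> w \<in> S}"

lemma finite_induced_edges: "finite S \<Longrightarrow> finite (induced_edges adj S)"
  by (rule finite_subset[of _ "Pow S"]) (auto simp: induced_edges_def)

lemma connected_descent_to_set:
  assumes conn: "\<And>s t. adj\<^sup>*\<^sup>* s t" and "S \<noteq> {}"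
  obtains nxt and d :: "'v \<Rightarrow> nat" where "\<And>v. v \<notin> S \<Longrightarrow> adj v (nxt v) \<and> d (nxt v) < d v"
proof -
  obtain s0 where "s0 \<in> S" using \<open>S \<noteq> {}\<close> by auto
  define d where "d v = (LEAST k. \<exists>s\<in>S. (adj ^^ k) v s)" for v
  have reach: "\<exists>k. \<exists>s\<in>S. (adj ^^ k) v s" for v
    using conn[of v s0] \<open>s0 \<in> S\<close> by (auto simp: rtranclp_power)
  have "\<exists>u. adj v u \<and> d u < d v" if "v \<notin> S" for v
  proof -
    obtain s where s: "s \<in> S" "(adj ^^ d v) v s"
      using LeastI_ex[OF reach[of v]] unfolding d_def by blast
    with that obtain j where j: "d v = Suc j"
      by (cases "d v") auto
    with s obtain u where "adj v u" "(adj ^^ j) u s"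
      by (metis relpowp_Suc_D2)
    moreover from this s have "d u \<le> j"
      unfolding d_def by (blast intro: Least_le)
    ultimately show "\<exists>u. adj v u \<and> d u < d v"
      using j by auto
  qed
  then obtain nxt where "\<And>v. v \<notin> S \<Longrightarrow> adj v (nxt v) \<and> d (nxt v) < d v"
    by metis
  then show thesis ..
qed

text \<open>Each vertex outside \<open>S\<close> owns the edge along which it leaves towards \<open>S\<close>, so at least
  \<open>card (UNIV - S)\<close> edges of the tree are not induced by \<open>S\<close>.\<close>

lemma card_induced_edges_tree:
  fixes adj :: "'v::finite \<Rightarrow> 'v \<Rightarrow> bool"
  assumes tree: "is_tree adj" and "S \<noteq> {}"
  shows "card (induced_edges adj S) \<le> card S - 1"
proof -
  have conn: "\<And>s t. adj\<^sup>*\<^sup>* s t" and card_edges: "card (tree_edges adj) = card (UNIV :: 'v set) - 1"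
    using tree unfolding is_tree_def by auto
  obtain nxt and d :: "'v \<Rightarrow> nat" where nxt: "\<And>v. v \<notin> S \<Longrightarrow> adj v (nxt v) \<and> d (nxt v) < d v"
    using connected_descent_to_set[OF conn \<open>S \<noteq> {}\<close>] by blast
  define g where "g v = {v, nxt v}" for v
  have "inj_on g (UNIV - S)"
  proof (rule inj_onI)
    fix v w assume "v \<in> UNIV - S" "w \<in> UNIV - S" "g v = g w"
    then show "v = w"
      using nxt[of v] nxt[of w] unfolding g_def by (auto simp: doubleton_eq_iff)
  qed
  moreover have "g ` (UNIV - S) \<subseteq> tree_edges adj - induced_edges adj S"
    using nxt unfolding g_def tree_edges_def induced_edges_def by (fastforce simp: doubleton_eq_iff)
  ultimately have "card (UNIV - S) \<le> card (tree_edges adj - induced_edges adj S)"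
    by (simp add: card_inj_on_le)
  moreover have "induced_edges adj S \<subseteq> tree_edges adj"
    unfolding induced_edges_def tree_edges_def by auto
  moreover have "card (UNIV - S) = card (UNIV :: 'v set) - card S"
    by (simp add: card_Diff_subset)
  moreover have "0 < card S" "card S \<le> card (UNIV :: 'v set)"
    using \<open>S \<noteq> {}\<close> by (simp_all add: card_gt_0_iff card_mono)
  ultimately show ?thesis
    using card_mono[of "tree_edges adj" "induced_edges adj S"]
    by (simp add: card_Diff_subset card_edges)
qed

text \<open>Handshake count: the ordered pairs of adjacent vertices of \<open>C\<close> number twice the edges.\<close>

lemma card_le_card_induced_edges:
  assumes sym: "\<And>s t. adj s t \<Longrightarrow> adj t s" and irrefl: "\<And>s. \<not> adj s s"
    and "finite C" and deg: "\<forall>v\<in>C. 2 \<le> card {u\<in>C. adj v u}"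
  shows "card C \<le> card (induced_edges adj C)"
proof -
  define P where "P = (SIGMA v:C. {u\<in>C. adj v u})"
  define ends where "ends e = {q\<in>P. {fst q, snd q} = e}" for e
  have "2 * card C = (\<Sum>v\<in>C. 2)"
    by simp
  also have "\<dots> \<le> (\<Sum>v\<in>C. card {u\<in>C. adj v u})"
    using deg by (intro sum_mono) auto
  also have "\<dots> = card P"
    using \<open>finite C\<close> by (simp add: P_def)
  also have "P = (\<Union>e\<in>induced_edges adj C. ends e)"
  proof
    show "P \<subseteq> (\<Union>e\<in>induced_edges adj C. ends e)"
    proof (rule subrelI)
      fix a b assume "(a, b) \<in> P"
      then have "{a, b} \<in> induced_edges adj C"
        unfolding P_def induced_edges_def by blast
      with \<open>(a, b) \<in> P\<close> show "(a, b) \<in> (\<Union>e\<in>induced_edges adj C. ends e)"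
        unfolding ends_def by auto
    qed
  qed (auto simp: ends_def)
  also have "card \<dots> = (\<Sum>e\<in>induced_edges adj C. card (ends e))"
    using \<open>finite C\<close> by (intro card_UN_disjoint) (auto simp: ends_def P_def finite_induced_edges)
  also have "\<dots> = (\<Sum>e\<in>induced_edges adj C. 2)"
  proof (rule sum.cong)
    fix e assume "e \<in> induced_edges adj C"
    then obtain a b where ab: "e = {a, b}" "adj a b" "a \<in> C" "b \<in> C"
      unfolding induced_edges_def by blast
    then have "ends e = {(a, b), (b, a)}"
      unfolding ends_def P_def using sym by (auto simp: doubleton_eq_iff)
    moreover have "a \<noteq> b"
      using ab irrefl by blast
    ultimately show "card (ends e) = 2"
      by simp
  qed simp
  finally show ?thesis by simp
qed

text \<open>Otherwise every covered vertex has two covered neighbours, so the covered vertices would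
  induce at least as many edges as there are vertices, which no forest does.\<close>

lemma partial_domino_tiling_leaf:
  fixes adj :: "'v::finite \<Rightarrow> 'v \<Rightarrow> bool"
  assumes tree: "is_tree adj" and D: "partial_domino_tiling adj D" and "D \<noteq> {}"
  obtains l p where "{l, p} \<in> D" "adj l p" "\<And>s. adj l s \<Longrightarrow> s \<in> \<Union>D \<Longrightarrow> s = p"
proof -
  have sym: "\<And>s t. adj s t \<Longrightarrow> adj t s" and irrefl: "\<And>s. \<not> adj s s"
    using is_tree_sym[OF tree] is_tree_irrefl[OF tree] by blast+
  have dominoes: "\<exists>a b. e = {a, b} \<and> adj a b" if "e \<in> D" for e
    using D that unfolding partial_domino_tiling_def tree_edges_def by blast
  have "\<exists>l p. {l, p} \<in> D \<and> adj l p \<and> (\<forall>s. adj l s \<longrightarrow> s \<in> \<Union>D \<longrightarrow> s = p)"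
  proof (rule ccontr)
    assume no_leaf: "\<not> ?thesis"
    have "2 \<le> card {u\<in>\<Union>D. adj v u}" if "v \<in> \<Union>D" for v
    proof -
      from that obtain e where "e \<in> D" "v \<in> e"
        by blast
      moreover from this obtain a b where "e = {a, b}" "adj a b"
        using dominoes by blast
      ultimately have "\<exists>p. {v, p} \<in> D \<and> adj v p"
        using sym by (auto simp: insert_commute)
      then obtain p where p: "{v, p} \<in> D" "adj v p"
        by blast
      with no_leaf obtain s where "adj v s" "s \<in> \<Union>D" "s \<noteq> p"
        by blast
      with p have "{p, s} \<subseteq> {u\<in>\<Union>D. adj v u}" "card {p, s} = 2"
        by auto
      then show ?thesis
        using card_mono[of "{u\<in>\<Union>D. adj v u}" "{p, s}"] by simp
    qed
    then have "card (\<Union>D) \<le> card (induced_edges adj (\<Union>D))"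
      using card_le_card_induced_edges[of adj, OF sym irrefl] by simp
    moreover obtain e where "e \<in> D"
      using \<open>D \<noteq> {}\<close> by blast
    then have "\<Union>D \<noteq> {}"
      using dominoes by blast
    then have "card (induced_edges adj (\<Union>D)) \<le> card (\<Union>D) - 1" "0 < card (\<Union>D)"
      using card_induced_edges_tree[OF tree] by (simp_all add: card_gt_0_iff)
    ultimately show False
      by linarith
  qed
  with that show thesis
    by blast
qed

lemma partial_domino_tiling_Union_Diff:
  "partial_domino_tiling adj D \<Longrightarrow> e \<in> D \<Longrightarrow> \<Union>(D - {e}) = \<Union>D - e"
  unfolding partial_domino_tiling_def by blast

lemma prod_fun_upd_neutral:
  assumes "finite A" and "f q = 1"
  shows "(\<Prod>s\<in>A. (f(q := a)) s) = (if q \<in> A then a else 1) * (\<Prod>s\<in>A. f s)"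
proof (cases "q \<in> A")
  case True
  then have "(\<Prod>s\<in>A. (f(q := a)) s) = a * (\<Prod>s\<in>A - {q}. f s)"
    using \<open>finite A\<close> by (simp add: prod.remove)
  moreover have "(\<Prod>s\<in>A. f s) = (\<Prod>s\<in>A - {q}. f s)"
    using True \<open>finite A\<close> \<open>f q = 1\<close> by (simp add: prod.remove)
  ultimately show ?thesis
    using True by simp
qed (auto intro: prod.cong)

definition solves_neighbour_products ::
    "('v \<Rightarrow> 'v \<Rightarrow> bool) \<Rightarrow> 'v set \<Rightarrow> ('v \<Rightarrow> 'k::field) \<Rightarrow> ('v \<Rightarrow> 'k) \<Rightarrow> bool" where
  "solves_neighbour_products adj U c \<mu> \<longleftrightarrow>
     (\<forall>s. \<mu> s \<noteq> 0) \<and> (\<forall>s. s \<notin> U \<longrightarrow> \<mu> s = 1) \<and> (\<forall>t\<in>U. (\<Prod>s\<in>{s. adj s t}. \<mu> s) = c t)"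

lemma solves_neighbour_products_insert_domino:
  fixes c \<mu> :: "'v::finite \<Rightarrow> 'k::field"
  assumes sym: "\<And>s t. adj s t \<Longrightarrow> adj t s" and irrefl: "\<And>s. \<not> adj s s"
    and "adj l p" and "l \<notin> U" and nbrs_l: "\<And>s. adj l s \<Longrightarrow> s \<notin> U"
    and c: "\<forall>t. c t \<noteq> 0"
    and \<mu>: "solves_neighbour_products adj U (\<lambda>t. if adj p t then c t / c l else c t) \<mu>"
  shows "\<exists>\<mu>'. solves_neighbour_products adj (insert l (insert p U)) c \<mu>'"
proof -
  have \<mu>_nz: "\<And>s. \<mu> s \<noteq> 0" and \<mu>_one: "\<And>s. s \<notin> U \<Longrightarrow> \<mu> s = 1"
    and \<mu>_prod: "\<And>t. t \<in> U \<Longrightarrow> (\<Prod>s\<in>{s. adj s t}. \<mu> s) = (if adj p t then c t / c l else c t)"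
    using \<mu> unfolding solves_neighbour_products_def by auto
  have "p \<notin> U" "l \<noteq> p"
    using nbrs_l irrefl \<open>adj l p\<close> by auto
  define x where "x = c p / (\<Prod>s\<in>{s. adj s p}. \<mu> s)"
  define \<mu>' where "\<mu>' = \<mu>(p := c l, l := x)"
  have x_nz: "x \<noteq> 0"
    using c \<mu>_nz by (simp add: x_def)
  have prod_\<mu>': "(\<Prod>s\<in>{s. adj s t}. \<mu>' s)
      = (if adj l t then x else 1) * ((if adj p t then c l else 1) * (\<Prod>s\<in>{s. adj s t}. \<mu> s))" for t
  proof -
    have "(\<Prod>s\<in>{s. adj s t}. \<mu>' s)
        = (if l \<in> {s. adj s t} then x else 1) * (\<Prod>s\<in>{s. adj s t}. (\<mu>(p := c l)) s)"
      unfolding \<mu>'_def using \<open>l \<noteq> p\<close> \<mu>_one[OF \<open>l \<notin> U\<close>]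
      by (intro prod_fun_upd_neutral) simp_all
    also have "(\<Prod>s\<in>{s. adj s t}. (\<mu>(p := c l)) s)
        = (if p \<in> {s. adj s t} then c l else 1) * (\<Prod>s\<in>{s. adj s t}. \<mu> s)"
      using \<mu>_one[OF \<open>p \<notin> U\<close>] by (intro prod_fun_upd_neutral) simp_all
    finally show ?thesis
      by simp
  qed
  have "(\<Prod>s\<in>{s. adj s l}. \<mu> s) = 1"
    using \<mu>_one nbrs_l sym by (intro prod.neutral) blast
  then have eq_l: "(\<Prod>s\<in>{s. adj s l}. \<mu>' s) = c l"
    using prod_\<mu>'[of l] irrefl sym[OF \<open>adj l p\<close>] by simp
  have eq_p: "(\<Prod>s\<in>{s. adj s p}. \<mu>' s) = c p"
    using prod_\<mu>'[of p] irrefl \<open>adj l p\<close> \<mu>_nz by (simp add: x_def)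
  have eq_U: "(\<Prod>s\<in>{s. adj s t}. \<mu>' s) = c t" if "t \<in> U" for t
    using prod_\<mu>'[of t] nbrs_l[of t] \<mu>_prod[OF that] c that by auto
  have "solves_neighbour_products adj (insert l (insert p U)) c \<mu>'"
    unfolding solves_neighbour_products_def
    using \<mu>_nz \<mu>_one c x_nz eq_l eq_p eq_U by (auto simp: \<mu>'_def)
  then show ?thesis
    by blast
qed

lemma ex_solves_neighbour_products:
  fixes adj :: "'v::finite \<Rightarrow> 'v \<Rightarrow> bool" and c :: "'v \<Rightarrow> 'k::field"
  assumes tree: "is_tree adj" and "partial_domino_tiling adj D" and "\<forall>t. c t \<noteq> 0"
  shows "\<exists>\<mu>. solves_neighbour_products adj (\<Union>D) c \<mu>"
proof -
  have sym: "\<And>s t. adj s t \<Longrightarrow> adj t s" and irrefl: "\<And>s. \<not> adj s s"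
    using is_tree_sym[OF tree] is_tree_irrefl[OF tree] by blast+
  have "finite D"
    by simp
  then show ?thesis
    using assms(2,3)
  proof (induction D arbitrary: c rule: finite_remove_induct)
    case empty
    show ?case
      by (auto simp: solves_neighbour_products_def intro: exI[of _ "\<lambda>_. 1"])
  next
    case (remove A c)
    obtain l p where lp: "{l, p} \<in> A" "adj l p" and leaf: "\<And>s. adj l s \<Longrightarrow> s \<in> \<Union>A \<Longrightarrow> s = p"
      using partial_domino_tiling_leaf[OF tree remove.prems(1) \<open>A \<noteq> {}\<close>] by blast
    let ?A = "A - {{l, p}}"
    have tiling: "partial_domino_tiling adj ?A"
      using remove.prems(1) unfolding partial_domino_tiling_def by blast
    have nonzero: "\<forall>t. (if adj p t then c t / c l else c t) \<noteq> 0"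
      using remove.prems(2) by simp
    obtain \<mu> where
      \<mu>: "solves_neighbour_products adj (\<Union>?A) (\<lambda>t. if adj p t then c t / c l else c t) \<mu>"
      using remove.IH[OF lp(1) tiling nonzero] by blast
    have U: "\<Union>?A = \<Union>A - {l, p}"
      using partial_domino_tiling_Union_Diff[OF remove.prems(1) lp(1)] .
    then have "l \<notin> \<Union>?A" and "\<And>s. adj l s \<Longrightarrow> s \<notin> \<Union>?A"
      using leaf by blast+
    from solves_neighbour_products_insert_domino[where adj = adj, OF sym irrefl lp(2) this
        remove.prems(2) \<mu>]
    obtain \<mu>' where "solves_neighbour_products adj (insert l (insert p (\<Union>?A))) c \<mu>'"
      by blast
    moreover have "insert l (insert p (\<Union>?A)) = \<Union>A"
      using U lp(1) by blast
    ultimately show ?case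
      by auto
  qed
qed

theorem mainTheorem3:
  fixes adj :: "'v::finite \<Rightarrow> 'v \<Rightarrow> bool"
    and D :: "'v set set"
    and \<alpha> :: "'v \<Rightarrow> 'k::field"
  assumes "is_tree adj"
    and "partial_domino_tiling adj D"
    and "\<forall>t. \<alpha> t \<noteq> 0"
  shows "\<exists>\<beta> :: 'v \<Rightarrow> 'k. (\<forall>t. \<beta> t \<noteq> 0) \<and> (\<forall>s. covered D s \<longrightarrow> \<beta> s = 1)
           \<and> XT_iso adj \<alpha> \<beta>"
proof -
  obtain \<mu> where \<mu>: "solves_neighbour_products adj (\<Union>D) (\<lambda>t. inverse (\<alpha> t)) \<mu>"
    using ex_solves_neighbour_products[OF assms(1,2), of "\<lambda>t. inverse (\<alpha> t)"] assms(3) by auto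
  then have \<mu>_nz: "\<forall>s. \<mu> s \<noteq> 0"
    and \<mu>_prod: "\<And>t. t \<in> \<Union>D \<Longrightarrow> (\<Prod>s\<in>{s. adj s t}. \<mu> s) = inverse (\<alpha> t)"
    unfolding solves_neighbour_products_def by auto
  define \<beta> where "\<beta> = (\<lambda>t. \<alpha> t * (\<Prod>s\<in>{s. adj s t}. \<mu> s))"
  have "\<forall>t. \<beta> t \<noteq> 0"
    using assms(3) \<mu>_nz by (simp add: \<beta>_def)
  moreover have "\<forall>s. covered D s \<longrightarrow> \<beta> s = 1"
    using assms(3) \<mu>_prod by (simp add: \<beta>_def covered_def)
  moreover have "XT_iso adj \<alpha> \<beta>"
    unfolding \<beta>_def by (rule XT_iso_rescale[OF \<mu>_nz])
  ultimately show ?thesis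
    by blast
qed

end
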